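(* Let $\mathcal{I}$ be an $F_\sigma$ ideal on $\mathbb{N}$. Then (i) $\mathcal{I}$ is uniformly $p^+$; (ii) if $\mathcal{I}$ is $q^+$, then $\mathcal{I}$ is uniformly $q^+$. In particular, every selective $F_\sigma$ ideal is uniformly selective.
   Context: Subsets of $\mathbb{N}$ are identified with elements of $2^{\mathbb{N}}$. An ideal on $\mathbb{N}$ is a hereditary family closed under finite unions; it is $F_\sigma$ if it is an $F_\sigma$ subset of $2^{\mathbb{N}}$; $\mathcal{I}^+=2^{\mathbb{N}}\setminus\mathcal{I}$. For $x\subseteq\mathbb{N}$, $x/n=\{m\in x:m>n\}$. $\mathcal{I}$ is $q^+$ if for every $x\in\mathcal{I}^+$ and every partition $(s_n)_{n}$ of $x$ into finite sets there is $y\subseteq x$ with $y\in\mathcal{I}^+$ and $|y\cap s_n|\le 1$ for all $n$. $\mathcal{I}$ is selective if for every $\subseteq$-decreasing sequence $(x_n)_n$ in $\mathcal{I}^+$ there is $x\in\mathcal{I}^+$ with $x/n\subseteq x_n$ for all $n\in x$. $\mathcal{I}$ is uniformly $p^+$ if there is a Borel $G:(2^{\mathbb{N}})^{\mathbb{N}}\to2^{\mathbb{N}}$ such that for every decreasing sequence $(x_n)_n$ in $\mathcal{I}^+$, $G((x_n)_n)\in\mathcal{I}^+$ and $G((x_n)_n)\setminus x_n$ is finite for all $n$. $\mathcal{I}$ is uniformly $q^+$ if there is a Borel $F:2^{\mathbb{N}}\times([\mathbb{N}]^{<\omega})^{\mathbb{N}}\to2^{\mathbb{N}}$ such that whenever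 $x\in\mathcal{I}^+$ and $(s_n)_n$ is a partition of $x$ into finite sets, $y=F(x,(s_n)_n)$ satisfies $y\subseteq x$, $y\in\mathcal{I}^+$ and $|y\cap s_n|\le1$ for all $n$. $\mathcal{I}$ is uniformly selective if there is a Borel $H:(2^{\mathbb{N}})^{\mathbb{N}}\to2^{\mathbb{N}}$ such that for every decreasing sequence $(x_n)_n$ in $\mathcal{I}^+$, $x=H((x_n)_n)\in\mathcal{I}^+$ and $x/n\subseteq x_n$ for all $n\in x$. *)

theory Defs
  imports "HOL-Analysis.Analysis"
begin

text \<open>Subsets of nat are identified with points of the Cantor space 2^N = (nat \<Rightarrow> bool),
  carrying the product topology (bool discrete).\<close>

definition chi :: "nat set \<Rightarrow> (nat \<Rightarrow> bool)" where
  "chi x = (\<lambda>n. n \<in> x)"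

definition cantorM :: "nat set measure" where
  "cantorM = vimage_algebra UNIV chi borel"

definition seqM :: "(nat \<Rightarrow> nat set) measure" where
  "seqM = vimage_algebra UNIV (\<lambda>xs n. chi (xs n)) borel"

text \<open>Borel sigma-algebra of 2^N \<times> ([N]^{<omega})^N, where [N]^{<omega} is viewed as a
  (countable, hence Borel) subset of 2^N.\<close>
definition partM :: "(nat set \<times> (nat \<Rightarrow> nat set)) measure" where
  "partM = restrict_space (cantorM \<Otimes>\<^sub>M seqM) (UNIV \<times> {s. \<forall>n. finite (s n)})"

definition is_ideal :: "nat set set \<Rightarrow> bool" where
  "is_ideal I \<longleftrightarrow> {} \<in> I \<and> (\<forall>x\<in>I. \<forall>y. y \<subseteq> x \<longrightarrow> y \<in> I) \<and> (\<forall>x\<in>I. \<forall>y\<in>I. x \<union> y \<in> I)"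

definition fsigma_ideal :: "nat set set \<Rightarrow> bool" where
  "fsigma_ideal I \<longleftrightarrow> fsigma_in euclidean (chi ` I)"

definition positive :: "nat set set \<Rightarrow> nat set set" where
  "positive I = UNIV - I"

definition tail :: "nat set \<Rightarrow> nat \<Rightarrow> nat set" where
  "tail x n = {m \<in> x. m > n}"

definition decreasing_in :: "nat set set \<Rightarrow> (nat \<Rightarrow> nat set) \<Rightarrow> bool" where
  "decreasing_in A xs \<longleftrightarrow> (\<forall>n. xs (Suc n) \<subseteq> xs n) \<and> (\<forall>n. xs n \<in> A)"

text \<open>(s n) is a partition of x into finite sets (empty pieces allowed).\<close>
definition finite_partition :: "nat set \<Rightarrow> (nat \<Rightarrow> nat set) \<Rightarrow> bool" where
  "finite_partition x s \<longleftrightarrow> (\<forall>n. finite (s n)) \<and> (\<Union>n. s n) = x \<and>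
     (\<forall>n m. n \<noteq> m \<longrightarrow> s n \<inter> s m = {})"

definition qplus :: "nat set set \<Rightarrow> bool" where
  "qplus I \<longleftrightarrow> (\<forall>x s. x \<in> positive I \<and> finite_partition x s \<longrightarrow>
     (\<exists>y. y \<subseteq> x \<and> y \<in> positive I \<and> (\<forall>n. card (y \<inter> s n) \<le> 1)))"

definition selective :: "nat set set \<Rightarrow> bool" where
  "selective I \<longleftrightarrow> (\<forall>xs. decreasing_in (positive I) xs \<longrightarrow>
     (\<exists>x. x \<in> positive I \<and> (\<forall>n\<in>x. tail x n \<subseteq> xs n)))"

definition uniformly_pplus :: "nat set set \<Rightarrow> bool" where
  "uniformly_pplus I \<longleftrightarrow> (\<exists>G. G \<in> measurable seqM cantorM \<and>
     (\<forall>xs. decreasing_in (positive I) xs \<longrightarrow>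
        G xs \<in> positive I \<and> (\<forall>n. finite (G xs - xs n))))"

definition uniformly_qplus :: "nat set set \<Rightarrow> bool" where
  "uniformly_qplus I \<longleftrightarrow> (\<exists>F. F \<in> measurable partM cantorM \<and>
     (\<forall>x s. x \<in> positive I \<and> finite_partition x s \<longrightarrow>
        F (x, s) \<subseteq> x \<and> F (x, s) \<in> positive I \<and> (\<forall>n. card (F (x, s) \<inter> s n) \<le> 1)))"

definition uniformly_selective :: "nat set set \<Rightarrow> bool" where
  "uniformly_selective I \<longleftrightarrow> (\<exists>H. H \<in> measurable seqM cantorM \<and>
     (\<forall>xs. decreasing_in (positive I) xs \<longrightarrow>
        H xs \<in> positive I \<and> (\<forall>n\<in>H xs. tail (H xs) n \<subseteq> xs n)))"

end

theory Submission
  imports Defs "HOL-Library.Nat_Bijection"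
begin

text \<open>
  Write \<open>I\<close> as a countable union of closed sets \<open>A\<^sub>m\<close>. By compactness of \<open>2\<^sup>\<nat>\<close> the hereditary
  closure \<open>K\<^sub>m\<close> of \<open>A\<^sub>m\<close> is decided by finite initial segments, so a set is \<open>I\<close>-positive iff it
  lies outside every \<open>K\<^sub>m\<close>, and lying outside \<open>K\<^sub>m\<close> is witnessed by a finite subset.
  The Borel witnesses are therefore built greedily: at stage \<open>m\<close> take the first finite set, in a
  fixed enumeration of all finite sets, that lies outside \<open>K\<^sub>m\<close> and is compatible with what was
  chosen before (inside \<open>x\<^sub>m\<close> for \<open>p\<^sup>+\<close>; meeting each piece at most once, and only pieces not met
  before, for \<open>q\<^sup>+\<close>; diagonal with respect to the \<open>x\<^sub>n\<close> for selectivity). The union of the chosen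
  sets lies outside every \<open>K\<^sub>m\<close>, hence is positive, and it is a Borel function of the input
  because each stage depends on only countably many Borel conditions. A compatible finite set
  always exists: trivially for \<open>p\<^sup>+\<close>, and for \<open>q\<^sup>+\<close> and selectivity by applying the hypothesis to
  the input with the finitely many points already used removed; this needs all singletons to be
  small, and otherwise a positive singleton is itself a witness.
\<close>

section \<open>Membership predicates are Borel\<close>

instance bool :: second_countable_topology
proof
  show "\<exists>B::bool set set. countable B \<and> open = generate_topology B"
    by (intro exI[of _ "Pow UNIV"]) (auto simp: fun_eq_iff open_discrete intro: generate_topology.Basis)
qed

lemma borel_measurable_bool_iff: "(f :: 'a \<Rightarrow> bool) \<in> borel_measurable M \<longleftrightarrow> Measurable.pred M f"
proof -
  have "sets (borel :: bool measure) = sets (count_space UNIV)"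
    using sets_borel_eq_count_space[where 'a=bool] by simp
  then show ?thesis
    using measurable_cong_sets[OF refl] by blast
qed

lemma pred_mem_cantorM: "Measurable.pred cantorM (\<lambda>x. n \<in> x)"
proof -
  have "chi \<in> borel_measurable cantorM"
    unfolding cantorM_def by (rule measurable_vimage_algebra1) auto
  then have "(\<lambda>x. chi x n) \<in> borel_measurable cantorM"
    by (rule measurable_product_then_coordinatewise)
  then show ?thesis
    by (simp add: borel_measurable_bool_iff chi_def)
qed

lemma pred_mem_seqM: "Measurable.pred seqM (\<lambda>xs. n \<in> xs m)"
proof -
  have "(\<lambda>xs n. chi (xs n)) \<in> borel_measurable seqM"
    unfolding seqM_def by (rule measurable_vimage_algebra1) auto
  then have "(\<lambda>xs. chi (xs m)) \<in> borel_measurable seqM"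
    by (rule measurable_product_then_coordinatewise)
  then have "(\<lambda>xs. chi (xs m) n) \<in> borel_measurable seqM"
    by (rule measurable_product_then_coordinatewise)
  then show ?thesis
    by (simp add: borel_measurable_bool_iff chi_def)
qed

lemma pred_mem_fst_partM [measurable]: "Measurable.pred partM (\<lambda>p. n \<in> fst p)"
  unfolding partM_def
  by (rule measurable_restrict_space1) (rule measurable_compose[OF measurable_fst pred_mem_cantorM])

lemma pred_mem_snd_partM [measurable]: "Measurable.pred partM (\<lambda>p. n \<in> snd p j)"
  unfolding partM_def
  by (rule measurable_restrict_space1) (rule measurable_compose[OF measurable_snd pred_mem_seqM])

lemma measurable_cantorM:
  assumes "\<And>n. Measurable.pred M (\<lambda>w. n \<in> F w)"
  shows "F \<in> M \<rightarrow>\<^sub>M cantorM"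
  unfolding cantorM_def
proof (rule measurable_vimage_algebra2)
  show "(\<lambda>w. chi (F w)) \<in> borel_measurable M"
    by (rule measurable_coordinatewise_then_product) (simp add: chi_def borel_measurable_bool_iff assms)
qed simp

section \<open>Greedy choice of finite sets\<close>

text \<open>If no finite set satisfies \<open>P\<close>, this is some unspecified finite set.\<close>

definition first_finite :: "(nat set \<Rightarrow> bool) \<Rightarrow> nat set" where
  "first_finite P = set_decode (LEAST k. P (set_decode k))"

lemma finite_first_finite: "finite (first_finite P)"
  by (simp add: first_finite_def)

lemma first_finiteI:
  assumes "finite B" "P B"
  shows "P (first_finite P)"
proof -
  have "P (set_decode (set_encode B))"
    using assms by simp
  then show ?thesis
    unfolding first_finite_def by (rule LeastI)
qed

lemma measurable_first_finite:
  assumes "\<And>B. Measurable.pred M (\<lambda>w. P w B)"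
  shows "(\<lambda>w. first_finite (P w)) \<in> M \<rightarrow>\<^sub>M count_space UNIV"
  unfolding first_finite_def
  by (rule measurable_compose[OF measurable_Least measurable_count_space]) (rule assms)

text \<open>\<open>C w m T B\<close> says that \<open>B\<close> is an admissible choice at stage \<open>m\<close> for the input \<open>w\<close>, given the
  set \<open>T\<close> chosen at the earlier stages.\<close>

fun greedy_acc :: "('w \<Rightarrow> nat \<Rightarrow> nat set \<Rightarrow> nat set \<Rightarrow> bool) \<Rightarrow> 'w \<Rightarrow> nat \<Rightarrow> nat set" where
  "greedy_acc C w 0 = {}"
| "greedy_acc C w (Suc m) = greedy_acc C w m \<union> first_finite (C w m (greedy_acc C w m))"

definition greedy_step :: "('w \<Rightarrow> nat \<Rightarrow> nat set \<Rightarrow> nat set \<Rightarrow> bool) \<Rightarrow> 'w \<Rightarrow> nat \<Rightarrow> nat set" where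
  "greedy_step C w m = first_finite (C w m (greedy_acc C w m))"

definition greedy_union :: "('w \<Rightarrow> nat \<Rightarrow> nat set \<Rightarrow> nat set \<Rightarrow> bool) \<Rightarrow> 'w \<Rightarrow> nat set" where
  "greedy_union C w = (\<Union>m. greedy_acc C w m)"

lemma greedy_acc_eq: "greedy_acc C w m = (\<Union>i<m. greedy_step C w i)"
  by (induction m) (auto simp: greedy_step_def lessThan_Suc)

lemma greedy_union_eq: "greedy_union C w = (\<Union>m. greedy_step C w m)"
  unfolding greedy_union_def greedy_acc_eq by blast

lemma finite_greedy_acc: "finite (greedy_acc C w m)"
  by (induction m) (auto simp: finite_first_finite)

lemma greedy_acc_mono: "i \<le> j \<Longrightarrow> greedy_acc C w i \<subseteq> greedy_acc C w j"
  unfolding greedy_acc_eq by (rule UN_mono) auto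

lemma greedy_step_satisfies:
  assumes "\<And>T. finite T \<Longrightarrow> \<exists>B. finite B \<and> C w m T B"
  shows "C w m (greedy_acc C w m) (greedy_step C w m)"
proof -
  obtain B where "finite B" "C w m (greedy_acc C w m) B"
    using assms[OF finite_greedy_acc[of C w m]] by blast
  then show ?thesis
    unfolding greedy_step_def by (rule first_finiteI)
qed

lemma greedy_union_diff_acc: "greedy_union C w - greedy_acc C w n \<subseteq> (\<Union>m\<in>{n..}. greedy_step C w m)"
  unfolding greedy_union_eq greedy_acc_eq by auto (meson atLeast_iff lessThan_iff not_le)

lemma measurable_greedy_acc:
  assumes "\<And>m T B. Measurable.pred M (\<lambda>w. C w m T B)"
  shows "(\<lambda>w. greedy_acc C w m) \<in> M \<rightarrow>\<^sub>M count_space {A. finite A}"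
proof (induction m)
  case 0
  show ?case by simp
next
  case (Suc m)
  have "(\<lambda>w. T \<union> first_finite (C w m T)) \<in> M \<rightarrow>\<^sub>M count_space {A. finite A}" if "finite T" for T
  proof (rule measurable_count_space_extend[OF subset_UNIV])
    show "(\<lambda>w. T \<union> first_finite (C w m T)) \<in> M \<rightarrow>\<^sub>M count_space UNIV"
      by (rule measurable_compose[OF measurable_first_finite measurable_count_space]) (rule assms)
  qed (simp add: that finite_first_finite)
  then show ?case
    using measurable_compose_countable'[OF _ Suc countable_Collect_finite,
        where f="\<lambda>T w. T \<union> first_finite (C w m T)"] by simp
qed

lemma measurable_greedy_union:
  assumes "\<And>m T B. Measurable.pred M (\<lambda>w. C w m T B)"
  shows "greedy_union C \<in> M \<rightarrow>\<^sub>M cantorM"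
proof (rule measurable_cantorM)
  fix n
  have "Measurable.pred M (\<lambda>w. n \<in> greedy_acc C w m)" for m
  proof (rule measurable_compose[where f="\<lambda>w. greedy_acc C w m"])
    show "(\<lambda>w. greedy_acc C w m) \<in> M \<rightarrow>\<^sub>M count_space {A. finite A}"
      using assms by (rule measurable_greedy_acc)
  qed simp
  then have "Measurable.pred M (\<lambda>w. \<exists>m. n \<in> greedy_acc C w m)"
    by (rule pred_intros_countable)
  then show "Measurable.pred M (\<lambda>w. n \<in> greedy_union C w)"
    by (simp add: greedy_union_def)
qed

definition extends_pairwise :: "('a \<Rightarrow> 'a \<Rightarrow> bool) \<Rightarrow> 'a set \<Rightarrow> 'a set \<Rightarrow> bool" where
  "extends_pairwise R T B \<longleftrightarrow>
     (\<forall>a b. a \<in> B \<longrightarrow> b \<in> B \<longrightarrow> R a b) \<and> (\<forall>t b. t \<in> T \<longrightarrow> b \<in> B \<longrightarrow> R t b \<and> R b t)"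

lemma pred_extends_pairwise:
  fixes R :: "'w \<Rightarrow> 'a::countable \<Rightarrow> 'a \<Rightarrow> bool"
  assumes "\<And>a b. Measurable.pred M (\<lambda>w. R w a b)"
  shows "Measurable.pred M (\<lambda>w. extends_pairwise (R w) T B)"
  unfolding extends_pairwise_def
  by (intro pred_intros_imp' pred_intros_countable(1) pred_intros_logic(3) assms)

lemma greedy_union_pairwise:
  assumes "\<And>m. extends_pairwise R (greedy_acc C w m) (greedy_step C w m)"
    and "a \<in> greedy_union C w" "b \<in> greedy_union C w"
  shows "R a b"
proof -
  have acc: "\<forall>a\<in>greedy_acc C w m. \<forall>b\<in>greedy_acc C w m. R a b" for m
  proof (induction m)
    case (Suc m)
    then show ?case
      using assms(1)[of m] by (auto simp: extends_pairwise_def greedy_step_def)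
  qed simp
  obtain i j where "a \<in> greedy_acc C w i" "b \<in> greedy_acc C w j"
    using assms(2,3) unfolding greedy_union_def by blast
  then have "a \<in> greedy_acc C w (max i j)" "b \<in> greedy_acc C w (max i j)"
    using greedy_acc_mono[of i "max i j" C w] greedy_acc_mono[of j "max i j" C w] by auto
  then show ?thesis
    using acc by blast
qed

section \<open>Approximating an \<open>F\<^sub>\<sigma>\<close> ideal\<close>

text \<open>For \<open>chi ` A\<close> closed this is the hereditary closure of \<open>A\<close> (\<open>initially_dominated_closed\<close>);
  the point of the definition is that membership is decided by finite initial segments.\<close>

definition initially_dominated :: "nat set set \<Rightarrow> nat set set" where
  "initially_dominated A = {y. \<forall>k. \<exists>z\<in>A. y \<inter> {..<k} \<subseteq> z}"

lemma initially_dominated_subset: "y \<in> initially_dominated A \<Longrightarrow> y' \<subseteq> y \<Longrightarrow> y' \<in> initially_dominated A"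
  unfolding initially_dominated_def by blast

lemma subset_in_initially_dominated: "z \<in> A \<Longrightarrow> y \<subseteq> z \<Longrightarrow> y \<in> initially_dominated A"
  unfolding initially_dominated_def by blast

lemma not_initially_dominated_finite:
  assumes "y \<notin> initially_dominated A"
  shows "\<exists>B\<subseteq>y. finite B \<and> B \<notin> initially_dominated A"
proof -
  obtain k where "\<forall>z\<in>A. \<not> y \<inter> {..<k} \<subseteq> z"
    using assms unfolding initially_dominated_def by blast
  then have "\<not> (\<exists>z\<in>A. (y \<inter> {..<k}) \<inter> {..<k} \<subseteq> z)"
    by (simp add: Int_assoc)
  then have "y \<inter> {..<k} \<notin> initially_dominated A"
    unfolding initially_dominated_def by blast
  then show ?thesis
    by blast
qed

lemma compact_cantor_space: "compact (UNIV :: (nat \<Rightarrow> bool) set)"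
proof -
  have "compact_space (euclidean :: bool topology)"
    by (simp add: compact_space_def finite_imp_compact)
  then have "compact_space (product_topology (\<lambda>i::nat. (euclidean :: bool topology)) UNIV)"
    using compact_space_product_topology by blast
  then show ?thesis
    by (simp add: euclidean_product_topology compact_space_def)
qed

lemma initially_dominated_closed:
  assumes "closed (chi ` A)" and "y \<in> initially_dominated A"
  shows "\<exists>z\<in>A. y \<subseteq> z"
proof -
  define E where "E k = (\<Inter>n\<in>y \<inter> {..<k}. {g. g n})" for k
  have "closed {g :: nat \<Rightarrow> bool. g n}" for n
    using closed_Collect_eq[of "\<lambda>g. g n" "\<lambda>_. True"] by simp
  then have "closed (E k)" for k
    unfolding E_def by blast
  moreover have "chi ` A \<inter> (\<Inter>k\<in>K. E k) \<noteq> {}" if "finite K" for K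
  proof -
    obtain k0 where k0: "K \<subseteq> {..<k0}"
      using finite_nat_bounded[OF \<open>finite K\<close>] by blast
    obtain z where "z \<in> A" "y \<inter> {..<k0} \<subseteq> z"
      using assms(2) unfolding initially_dominated_def by blast
    then have "chi z \<in> chi ` A \<inter> E k0"
      unfolding E_def chi_def by auto
    moreover have "E k0 \<subseteq> E k" if "k \<in> K" for k
      using that k0 unfolding E_def by auto
    ultimately show ?thesis
      by blast
  qed
  moreover have "compact (chi ` A)"
    using assms(1) compact_cantor_space closed_Int_compact by fastforce
  ultimately obtain g where "g \<in> chi ` A" "\<And>k. g \<in> E k"
    using compact_imp_fip_image[of "chi ` A" UNIV E] by blast
  then show ?thesis
    unfolding E_def chi_def by auto
qed

lemma bij_chi: "bij chi"
proof (rule bijI)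
  show "inj chi"
    unfolding chi_def by (rule injI) (metis Collect_mem_eq)
  show "surj chi"
    by (rule surjI[of _ "\<lambda>g. {n. g n}"]) (simp add: chi_def)
qed

locale approximated_ideal =
  fixes I :: "nat set set" and K :: "nat \<Rightarrow> nat set set"
  assumes ideal: "is_ideal I"
    and approx_hereditary: "y \<in> K m \<Longrightarrow> y' \<subseteq> y \<Longrightarrow> y' \<in> K m"
    and mem_iff_approx: "y \<in> I \<longleftrightarrow> (\<exists>m. y \<in> K m)"
    and approx_finite_witness: "y \<notin> K m \<Longrightarrow> \<exists>B\<subseteq>y. finite B \<and> B \<notin> K m"

lemma fsigma_ideal_approximation:
  assumes "is_ideal I" "fsigma_ideal I"
  obtains K where "approximated_ideal I K"
proof -
  obtain C :: "nat \<Rightarrow> (nat \<Rightarrow> bool) set" where C: "\<And>m. closed (C m)" "\<Union> (range C) = chi ` I"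
    using assms(2) unfolding fsigma_ideal_def fsigma_in_ascending by auto
  define A where "A m = chi -` C m" for m
  have closed_A: "closed (chi ` A m)" for m
    unfolding A_def using C(1) bij_chi by (simp add: bij_is_surj surj_image_vimage_eq)
  have I_eq: "I = (\<Union>m. A m)"
    unfolding A_def using C(2) bij_chi by (simp add: bij_is_inj inj_vimage_image_eq flip: vimage_UN)
  have "y \<in> I \<longleftrightarrow> (\<exists>m. y \<in> initially_dominated (A m))" for y
  proof
    assume "y \<in> I"
    then show "\<exists>m. y \<in> initially_dominated (A m)"
      unfolding I_eq by (auto intro: subset_in_initially_dominated)
  next
    assume "\<exists>m. y \<in> initially_dominated (A m)"
    then obtain m z where "z \<in> A m" "y \<subseteq> z"
      using initially_dominated_closed[OF closed_A] by blast
    then show "y \<in> I"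
      using assms(1) unfolding I_eq is_ideal_def by blast
  qed
  then have "approximated_ideal I (\<lambda>m. initially_dominated (A m))"
    using assms(1) initially_dominated_subset not_initially_dominated_finite
    by unfold_locales blast+
  then show ?thesis
    by (rule that)
qed

section \<open>Uniform witnesses\<close>

lemma decreasing_in_antimono: "decreasing_in A xs \<Longrightarrow> m \<le> n \<Longrightarrow> xs n \<subseteq> xs m"
  unfolding decreasing_in_def by (metis lift_Suc_antimono_le)

lemma selectiveD:
  "selective I \<Longrightarrow> decreasing_in (positive I) xs \<Longrightarrow>
    \<exists>x. x \<in> positive I \<and> (\<forall>n\<in>x. tail x n \<subseteq> xs n)"
  unfolding selective_def by blast

lemma qplusD:
  "qplus I \<Longrightarrow> x \<in> positive I \<Longrightarrow> finite_partition x s \<Longrightarrow>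
    \<exists>y\<subseteq>x. y \<in> positive I \<and> (\<forall>n. card (y \<inter> s n) \<le> 1)"
  unfolding qplus_def by blast

definition piece_separated :: "(nat \<Rightarrow> nat set) \<Rightarrow> nat \<Rightarrow> nat \<Rightarrow> bool" where
  "piece_separated s a b \<longleftrightarrow> (\<forall>j. a \<in> s j \<longrightarrow> b \<in> s j \<longrightarrow> a = b)"

lemma pred_piece_separated: "Measurable.pred partM (\<lambda>p. piece_separated (snd p) a b)"
  unfolding piece_separated_def by measurable

lemma card_piece_le_1:
  assumes "finite (s n)" "\<And>a b. a \<in> y \<Longrightarrow> b \<in> y \<Longrightarrow> piece_separated s a b"
  shows "card (y \<inter> s n) \<le> 1"
  using assms by (auto simp: card_le_Suc0_iff_eq piece_separated_def)

lemma finite_partition_diff: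
  "finite_partition x s \<Longrightarrow> finite_partition (x - D) (\<lambda>j. s j - D)"
  unfolding finite_partition_def by blast

lemma finite_pieces_meeting:
  assumes "finite_partition x s" "finite T"
  shows "finite (\<Union>j\<in>{j. s j \<inter> T \<noteq> {}}. s j)"
proof -
  have "finite {j. t \<in> s j}" for t
  proof (cases "\<exists>j. t \<in> s j")
    case True
    then obtain j0 where "t \<in> s j0"
      by blast
    then have "{j. t \<in> s j} \<subseteq> {j0}"
      using assms(1) unfolding finite_partition_def by blast
    then show ?thesis
      by (rule finite_subset) simp
  qed simp
  moreover have "{j. s j \<inter> T \<noteq> {}} = (\<Union>t\<in>T. {j. t \<in> s j})"
    by blast
  ultimately have "finite {j. s j \<inter> T \<noteq> {}}"
    using assms(2) by simp
  then show ?thesis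
    using assms(1) unfolding finite_partition_def by blast
qed

context approximated_ideal
begin

lemma positive_iff: "y \<in> positive I \<longleftrightarrow> (\<forall>m. y \<notin> K m)"
  unfolding positive_def using mem_iff_approx by blast

lemma positive_finite_witness:
  assumes "y \<in> positive I"
  obtains B where "B \<subseteq> y" "finite B" "B \<notin> K m"
  using assms approx_finite_witness positive_iff by blast

lemma positive_diff:
  assumes "x \<in> positive I" "D \<in> I"
  shows "x - D \<in> positive I"
proof -
  have "x \<subseteq> (x - D) \<union> D"
    by blast
  then show ?thesis
    using assms ideal unfolding positive_def is_ideal_def by blast
qed

lemma finite_in_ideal: "finite D \<Longrightarrow> (\<And>a. a \<in> D \<Longrightarrow> {a} \<in> I) \<Longrightarrow> D \<in> I"
proof (induction D rule: finite_induct)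
  case empty
  then show ?case
    using ideal by (simp add: is_ideal_def)
next
  case (insert a D)
  then have "{a} \<in> I" "D \<in> I"
    by auto
  then have "{a} \<union> D \<in> I"
    using ideal unfolding is_ideal_def by blast
  then show ?case
    by simp
qed

lemma greedy_union_positive:
  assumes "\<And>m T. finite T \<Longrightarrow> \<exists>B. finite B \<and> C w m T B"
    and "\<And>m T B. C w m T B \<Longrightarrow> B \<notin> K m"
  shows "greedy_union C w \<in> positive I"
proof -
  have "greedy_step C w m \<notin> K m" for m
    using assms(2) greedy_step_satisfies[of C w m, OF assms(1)] by blast
  moreover have "greedy_step C w m \<subseteq> greedy_union C w" for m
    unfolding greedy_union_eq by blast
  ultimately have "greedy_union C w \<notin> K m" for m
    using approx_hereditary by blast
  then show ?thesis
    by (simp add: positive_iff)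
qed

subsection \<open>\<open>p\<^sup>+\<close>\<close>

definition pplus_stage :: "(nat \<Rightarrow> nat set) \<Rightarrow> nat \<Rightarrow> nat set \<Rightarrow> nat set \<Rightarrow> bool" where
  "pplus_stage xs m T B \<longleftrightarrow> B \<notin> K m \<and> B \<subseteq> xs m"

lemma pred_pplus_stage: "Measurable.pred seqM (\<lambda>xs. pplus_stage xs m T B)"
  unfolding pplus_stage_def subset_eq
  by (intro pred_intros_conj1' pred_intros_countable_bounded(3) pred_mem_seqM)

lemma pplus_stage_exists:
  assumes "decreasing_in (positive I) xs"
  shows "\<exists>B. finite B \<and> pplus_stage xs m T B"
proof -
  have "xs m \<in> positive I"
    using assms unfolding decreasing_in_def by blast
  then show ?thesis
    unfolding pplus_stage_def by (meson positive_finite_witness)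
qed

lemma greedy_pplus_almost_subset:
  assumes xs: "decreasing_in (positive I) xs"
  shows "finite (greedy_union pplus_stage xs - xs n)"
proof (rule finite_subset[OF _ finite_greedy_acc])
  show "greedy_union pplus_stage xs - xs n \<subseteq> greedy_acc pplus_stage xs n"
  proof
    fix a assume a: "a \<in> greedy_union pplus_stage xs - xs n"
    show "a \<in> greedy_acc pplus_stage xs n"
    proof (rule ccontr)
      assume "a \<notin> greedy_acc pplus_stage xs n"
      then obtain m where "n \<le> m" "a \<in> greedy_step pplus_stage xs m"
        using a greedy_union_diff_acc[of pplus_stage xs n] by blast
      moreover have "pplus_stage xs m (greedy_acc pplus_stage xs m) (greedy_step pplus_stage xs m)"
        by (rule greedy_step_satisfies) (rule pplus_stage_exists[OF xs])
      ultimately have "a \<in> xs m"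
        unfolding pplus_stage_def by blast
      then show False
        using a decreasing_in_antimono[OF xs \<open>n \<le> m\<close>] by blast
    qed
  qed
qed

lemma uniformly_pplus: "uniformly_pplus I"
  unfolding uniformly_pplus_def
proof (intro exI[of _ "greedy_union pplus_stage"] conjI allI impI)
  show "greedy_union pplus_stage \<in> seqM \<rightarrow>\<^sub>M cantorM"
    using pred_pplus_stage by (rule measurable_greedy_union)
  fix xs assume xs: "decreasing_in (positive I) xs"
  show "greedy_union pplus_stage xs \<in> positive I"
    using pplus_stage_exists[OF xs] by (intro greedy_union_positive) (auto simp: pplus_stage_def)
  fix n
  show "finite (greedy_union pplus_stage xs - xs n)"
    using xs by (rule greedy_pplus_almost_subset)
qed

subsection \<open>\<open>q\<^sup>+\<close>\<close>

definition qplus_stage :: "nat set \<times> (nat \<Rightarrow> nat set) \<Rightarrow> nat \<Rightarrow> nat set \<Rightarrow> nat set \<Rightarrow> bool" where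
  "qplus_stage p m T B \<longleftrightarrow> B \<notin> K m \<and> B \<subseteq> fst p \<and> extends_pairwise (piece_separated (snd p)) T B"

lemma pred_qplus_stage: "Measurable.pred partM (\<lambda>p. qplus_stage p m T B)"
  unfolding qplus_stage_def subset_eq
  by (intro pred_intros_conj1' pred_intros_logic(3) pred_intros_countable_bounded(3)
      pred_mem_fst_partM pred_extends_pairwise pred_piece_separated)

text \<open>Discard the finitely many pieces meeting \<open>T\<close>; this costs only a set in \<open>I\<close>, and \<open>q\<^sup>+\<close> applied to
  the rest gives a positive selector of the remaining pieces, a finite part of which escapes \<open>K m\<close>.\<close>

lemma qplus_stage_exists:
  assumes "qplus I" "x \<in> positive I" "finite_partition x s" "\<And>a. a \<in> x \<Longrightarrow> {a} \<in> I" "finite T"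
  shows "\<exists>B. finite B \<and> qplus_stage (x, s) m T B"
proof -
  define D where "D = (\<Union>j\<in>{j. s j \<inter> T \<noteq> {}}. s j)"
  have "finite D"
    unfolding D_def by (rule finite_pieces_meeting[OF assms(3,5)])
  then have "x \<inter> D \<in> I"
    by (intro finite_in_ideal[of "x \<inter> D"] assms(4)) auto
  then have "x - (x \<inter> D) \<in> positive I"
    by (rule positive_diff[OF assms(2)])
  moreover have "x - (x \<inter> D) = x - D"
    by blast
  ultimately obtain y where y: "y \<subseteq> x - D" "y \<in> positive I" "\<And>j. card (y \<inter> (s j - D)) \<le> 1"
    using qplusD[OF assms(1) _ finite_partition_diff[OF assms(3)]] by metis
  obtain B where B: "B \<subseteq> y" "finite B" "B \<notin> K m"
    using positive_finite_witness[OF y(2)] by blast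
  have "piece_separated s a b" if "a \<in> y" "b \<in> y" for a b
    unfolding piece_separated_def
  proof (intro allI impI)
    fix j assume "a \<in> s j" "b \<in> s j"
    then have "a \<in> y \<inter> (s j - D)" "b \<in> y \<inter> (s j - D)"
      using that y(1) by auto
    moreover have "finite (y \<inter> (s j - D))"
      using assms(3) unfolding finite_partition_def by blast
    ultimately show "a = b"
      using y(3)[of j] card_le_Suc0_iff_eq by (metis One_nat_def)
  qed
  moreover have "piece_separated s t b \<and> piece_separated s b t" if "t \<in> T" "b \<in> B" for t b
  proof -
    have "b \<notin> D"
      using that B(1) y(1) by blast
    then show ?thesis
      using that(1) unfolding piece_separated_def D_def by blast
  qed
  ultimately have "extends_pairwise (piece_separated s) T B"
    using B(1) unfolding extends_pairwise_def by blast
  then show ?thesis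
    using B y(1) unfolding qplus_stage_def by auto
qed

lemma greedy_qplus_correct:
  assumes "qplus I" "x \<in> positive I" "finite_partition x s" "\<And>a. a \<in> x \<Longrightarrow> {a} \<in> I"
  defines "y \<equiv> greedy_union qplus_stage (x, s)"
  shows "y \<subseteq> x" "y \<in> positive I" "card (y \<inter> s n) \<le> 1"
proof -
  have stage: "\<exists>B. finite B \<and> qplus_stage (x, s) m T B" if "finite T" for m T
    using assms(1-4) that by (rule qplus_stage_exists)
  have step: "qplus_stage (x, s) m (greedy_acc qplus_stage (x, s) m) (greedy_step qplus_stage (x, s) m)"
    for m by (rule greedy_step_satisfies[of qplus_stage "(x, s)" m, OF stage])
  show "y \<subseteq> x"
    using step unfolding y_def greedy_union_eq qplus_stage_def by auto
  show "y \<in> positive I"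
    unfolding y_def using stage by (intro greedy_union_positive) (auto simp: qplus_stage_def)
  have sep: "piece_separated s a b" if "a \<in> y" "b \<in> y" for a b
  proof -
    have "extends_pairwise (piece_separated s) (greedy_acc qplus_stage (x, s) m)
        (greedy_step qplus_stage (x, s) m)" for m
      using step[of m] by (simp add: qplus_stage_def)
    then show ?thesis
      using that unfolding y_def by (rule greedy_union_pairwise)
  qed
  have "finite (s n)"
    using assms(3) unfolding finite_partition_def by blast
  then show "card (y \<inter> s n) \<le> 1"
    using sep by (rule card_piece_le_1)
qed

definition positive_points :: "nat set" where
  "positive_points = {a. {a} \<notin> I}"

text \<open>If \<open>x\<close> contains a point with a positive singleton, that singleton is the witness; otherwise all
  finite subsets of \<open>x\<close> are in \<open>I\<close>, as \<open>qplus_stage_exists\<close> requires.\<close>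

definition qplus_witness :: "nat set \<times> (nat \<Rightarrow> nat set) \<Rightarrow> nat set" where
  "qplus_witness p = (if fst p \<inter> positive_points = {} then greedy_union qplus_stage p
     else {LEAST a. a \<in> fst p \<inter> positive_points})"

lemma measurable_qplus_witness: "qplus_witness \<in> partM \<rightarrow>\<^sub>M cantorM"
  unfolding qplus_witness_def
proof (rule measurable_If)
  show "greedy_union qplus_stage \<in> partM \<rightarrow>\<^sub>M cantorM"
    using pred_qplus_stage by (rule measurable_greedy_union)
  have least: "(\<lambda>p. LEAST a. a \<in> fst p \<inter> positive_points) \<in> partM \<rightarrow>\<^sub>M count_space UNIV"
    by (intro measurable_Least) (simp add: pred_intros_conj2')
  show "(\<lambda>p. {LEAST a. a \<in> fst p \<inter> positive_points}) \<in> partM \<rightarrow>\<^sub>M cantorM"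
    by (rule measurable_cantorM) (simp add: eq_commute[of n] measurable_compose[OF least])
  have "Measurable.pred partM (\<lambda>p. \<forall>a\<in>positive_points. a \<notin> fst p)"
    by (intro pred_intros_countable_bounded(3) pred_intros_logic(2) pred_mem_fst_partM)
  then show "{p \<in> space partM. fst p \<inter> positive_points = {}} \<in> sets partM"
    by (simp add: pred_def disjoint_iff)
qed

lemma qplus_witness_correct:
  assumes "qplus I" "x \<in> positive I" "finite_partition x s"
  shows "qplus_witness (x, s) \<subseteq> x \<and> qplus_witness (x, s) \<in> positive I \<and>
    (\<forall>n. card (qplus_witness (x, s) \<inter> s n) \<le> 1)"
proof (cases "x \<inter> positive_points = {}")
  case True
  then have "\<And>a. a \<in> x \<Longrightarrow> {a} \<in> I"
    unfolding positive_points_def by blast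
  note greedy = greedy_qplus_correct[OF assms this]
  have "qplus_witness (x, s) = greedy_union qplus_stage (x, s)"
    using True unfolding qplus_witness_def by simp
  then show ?thesis
    using greedy by simp
next
  case False
  define a where "a = (LEAST a. a \<in> x \<inter> positive_points)"
  obtain b where "b \<in> x \<inter> positive_points"
    using False by blast
  then have "a \<in> x \<inter> positive_points"
    unfolding a_def by (rule LeastI)
  moreover have "card ({a} \<inter> s n) \<le> 1" for n
    by (cases "a \<in> s n") auto
  ultimately show ?thesis
    using False unfolding qplus_witness_def a_def positive_def positive_points_def by auto
qed

lemma uniformly_qplus_if_qplus: "qplus I \<Longrightarrow> uniformly_qplus I"
  unfolding uniformly_qplus_def using measurable_qplus_witness qplus_witness_correct by blast

subsection \<open>Selectivity\<close>

definition selective_stage :: "(nat \<Rightarrow> nat set) \<Rightarrow> nat \<Rightarrow> nat set \<Rightarrow> nat set \<Rightarrow> bool" where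
  "selective_stage xs m T B \<longleftrightarrow> B \<notin> K m \<and> extends_pairwise (\<lambda>a b. a < b \<longrightarrow> b \<in> xs a) T B"

lemma pred_selective_stage: "Measurable.pred seqM (\<lambda>xs. selective_stage xs m T B)"
  unfolding selective_stage_def
  by (intro pred_intros_conj1' pred_extends_pairwise pred_intros_imp' pred_mem_seqM)

text \<open>Selectivity applied to the \<open>x\<^sub>n\<close> with an initial segment containing \<open>T\<close> removed gives a
  positive set whose elements beyond its first one exceed \<open>T\<close> and are diagonal for the \<open>x\<^sub>n\<close>.\<close>

lemma selective_stage_exists:
  assumes "selective I" "\<And>a. {a} \<in> I" "decreasing_in (positive I) xs" "finite T"
  shows "\<exists>B. finite B \<and> selective_stage xs m T B"
proof -
  obtain M where M: "T \<subseteq> {..<M}"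
    using finite_nat_bounded[OF assms(4)] by blast
  define ys where "ys n = xs (max n M) - {..<M}" for n
  have "decreasing_in (positive I) ys"
    unfolding decreasing_in_def
  proof (intro conjI allI)
    have "xs (max (Suc n) M) \<subseteq> xs (max n M)" for n
      by (rule decreasing_in_antimono[OF assms(3)]) simp
    then show "ys (Suc n) \<subseteq> ys n" for n
      unfolding ys_def by blast
    have "xs (max n M) \<in> positive I" for n
      using assms(3) unfolding decreasing_in_def by blast
    then show "ys n \<in> positive I" for n
      unfolding ys_def using assms(2) by (intro positive_diff finite_in_ideal[of "{..<M}"]) auto
  qed
  then obtain w where w: "w \<in> positive I" "\<And>n. n \<in> w \<Longrightarrow> tail w n \<subseteq> ys n"
    using selectiveD[OF assms(1)] by blast
  then obtain a0 where "a0 \<in> w"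
    using ideal unfolding positive_def is_ideal_def by blast
  have "tail w a0 = w - {..a0}"
    unfolding tail_def by auto
  moreover have "w - {..a0} \<in> positive I"
    using assms(2) by (intro positive_diff[OF w(1)] finite_in_ideal[of "{..a0}"]) auto
  ultimately obtain B where B: "B \<subseteq> tail w a0" "finite B" "B \<notin> K m"
    using positive_finite_witness by metis
  have late: "t < b \<and> b \<in> xs t" if "t \<in> T" "b \<in> B" for t b
  proof -
    have "b \<in> ys a0"
      using w(2)[OF \<open>a0 \<in> w\<close>] B(1) that(2) by blast
    moreover have "t < M"
      using M that(1) by blast
    moreover have "xs (max a0 M) \<subseteq> xs t"
      using \<open>t < M\<close> by (intro decreasing_in_antimono[OF assms(3)]) simp
    ultimately show ?thesis
      unfolding ys_def by auto
  qed
  have "b \<in> xs a" if "a \<in> B" "b \<in> B" "a < b" for a b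
  proof -
    have "a \<in> w" "b \<in> tail w a"
      using that B(1) unfolding tail_def by auto
    then have "b \<in> ys a"
      using w(2) by blast
    then show ?thesis
      unfolding ys_def using decreasing_in_antimono[OF assms(3), of a "max a M"] by auto
  qed
  then have "extends_pairwise (\<lambda>a b. a < b \<longrightarrow> b \<in> xs a) T B"
    using late unfolding extends_pairwise_def by (meson order.asym)
  then show ?thesis
    using B unfolding selective_stage_def by blast
qed

lemma greedy_selective_correct:
  assumes "selective I" "\<And>a. {a} \<in> I" "decreasing_in (positive I) xs"
  defines "y \<equiv> greedy_union selective_stage xs"
  shows "y \<in> positive I" "n \<in> y \<Longrightarrow> tail y n \<subseteq> xs n"
proof -
  have stage: "\<exists>B. finite B \<and> selective_stage xs m T B" if "finite T" for m T
    using assms(1-3) that by (rule selective_stage_exists)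
  show "y \<in> positive I"
    unfolding y_def using stage by (intro greedy_union_positive) (auto simp: selective_stage_def)
  have diagonal: "extends_pairwise (\<lambda>a b. a < b \<longrightarrow> b \<in> xs a)
      (greedy_acc selective_stage xs m) (greedy_step selective_stage xs m)" for m
    using greedy_step_satisfies[of selective_stage xs m, OF stage] by (simp add: selective_stage_def)
  assume n: "n \<in> y"
  show "tail y n \<subseteq> xs n"
  proof
    fix b assume "b \<in> tail y n"
    then have "b \<in> y" "n < b"
      unfolding tail_def by auto
    then show "b \<in> xs n"
      using greedy_union_pairwise[OF diagonal n[unfolded y_def]] unfolding y_def by blast
  qed
qed

lemma uniformly_selective_if_selective:
  assumes "selective I"
  shows "uniformly_selective I"
proof (cases "\<forall>a. {a} \<in> I")
  case True
  then have "\<And>a. {a} \<in> I"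
    by blast
  note greedy = greedy_selective_correct[OF assms this]
  have "greedy_union selective_stage \<in> seqM \<rightarrow>\<^sub>M cantorM"
    using pred_selective_stage by (rule measurable_greedy_union)
  then show ?thesis
    unfolding uniformly_selective_def using greedy by blast
next
  case False
  then obtain a where "{a} \<notin> I"
    by blast
  moreover have "(\<lambda>xs. {a}) \<in> seqM \<rightarrow>\<^sub>M cantorM"
    by (rule measurable_const) (simp add: cantorM_def)
  moreover have "tail {a} a = {}"
    unfolding tail_def by auto
  ultimately show ?thesis
    unfolding uniformly_selective_def positive_def by auto
qed

end

theorem mainTheorem9:
  assumes "is_ideal I" and "fsigma_ideal I"
  shows "uniformly_pplus I \<and> (qplus I \<longrightarrow> uniformly_qplus I) \<and>
         (selective I \<longrightarrow> uniformly_selective I)"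
proof -
  obtain K where "approximated_ideal I K"
    using fsigma_ideal_approximation[OF assms] by blast
  then interpret approximated_ideal I K .
  show ?thesis
    using uniformly_pplus uniformly_qplus_if_qplus uniformly_selective_if_selective by blast
qed

end
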